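(* Let $Z$ be an $n\times n$ positive definite complex matrix with largest eigenvalue $a$ and smallest eigenvalue $b$, and let $E$ be any orthogonal projection ($E=E^*=E^2$). Then $$EZE \le \frac{(a+b)^2}{4ab}\, Z.$$
   Context: $\le$ denotes the Loewner order on Hermitian matrices. *)

theory Defs
  imports "Jordan_Normal_Form.Schur_Decomposition"
begin

definition hermitian_mat :: "complex mat \<Rightarrow> bool" where
  "hermitian_mat A \<longleftrightarrow> A \<in> carrier_mat (dim_row A) (dim_row A) \<and> mat_adjoint A = A"

definition qform :: "complex mat \<Rightarrow> complex vec \<Rightarrow> complex" where
  "qform A v = conjugate v \<bullet> (A *\<^sub>v v)"

definition positive_semidefinite :: "complex mat \<Rightarrow> bool" where
  "positive_semidefinite A \<longleftrightarrow> hermitian_mat A \<and>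
     (\<forall>v \<in> carrier_vec (dim_row A). 0 \<le> Re (qform A v))"

definition positive_definite :: "complex mat \<Rightarrow> bool" where
  "positive_definite A \<longleftrightarrow> hermitian_mat A \<and>
     (\<forall>v \<in> carrier_vec (dim_row A). v \<noteq> 0\<^sub>v (dim_row A) \<longrightarrow> 0 < Re (qform A v))"

definition loewner_le :: "complex mat \<Rightarrow> complex mat \<Rightarrow> bool" where
  "loewner_le A B \<longleftrightarrow> dim_row A = dim_row B \<and> dim_col A = dim_col B \<and>
     hermitian_mat A \<and> hermitian_mat B \<and> positive_semidefinite (B - A)"

end

(* Write x = w + r with w = E x and r = x - w, which are orthogonal because E is an
   orthogonal projection.  On the span of w and r the form of Z lies between b |.|^2 and
   a |.|^2; evaluating the lower bound at (a - b) w + (a + b) r and the upper bound at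
   (a - b) w - (a + b) r and adding them with weights a and b yields
   4 a b <Z w, w> <= (a + b)^2 <Z x, x>, i.e. the claim.

   The Rayleigh bounds b |v|^2 <= <Z v, v> <= a |v|^2 need an eigenvalue at the bottom of
   the spectrum.  Let mu be the greatest lower bound of the Rayleigh quotient.  Then Z - mu
   is positive semidefinite, and if it were invertible, Cauchy-Schwarz for its form would
   make it coercive, contradicting the maximality of mu; so mu is an eigenvalue. *)

theory Submission
  imports Defs
begin

section \<open>Adjoints and Hermitian matrices\<close>

lemma mat_adjoint_carrier: "A \<in> carrier_mat n m \<Longrightarrow> mat_adjoint A \<in> carrier_mat m n"
  unfolding mat_adjoint_def by auto

lemma mat_adjoint_index:
  "A \<in> carrier_mat n m \<Longrightarrow> i < m \<Longrightarrow> j < n \<Longrightarrow> mat_adjoint A $$ (i, j) = cnj (A $$ (j, i))"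
  unfolding mat_adjoint_def by (auto simp: mat_of_rows_def)

lemma mat_adjoint_eqI:
  fixes A B :: "complex mat"
  assumes "A \<in> carrier_mat n m" and "B \<in> carrier_mat m n"
    and "\<And>i j. i < m \<Longrightarrow> j < n \<Longrightarrow> B $$ (i, j) = cnj (A $$ (j, i))"
  shows "mat_adjoint A = B"
  by (rule eq_matI) (use assms mat_adjoint_carrier[OF assms(1)] in \<open>auto simp: mat_adjoint_index\<close>)

lemma mat_adjoint_add:
  fixes A B :: "complex mat"
  assumes "A \<in> carrier_mat n m" and "B \<in> carrier_mat n m"
  shows "mat_adjoint (A + B) = mat_adjoint A + mat_adjoint B"
  by (rule mat_adjoint_eqI[of _ n m])
    (use assms mat_adjoint_carrier[OF assms(1)] mat_adjoint_carrier[OF assms(2)] in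
      \<open>auto simp: mat_adjoint_index\<close>)

lemma mat_adjoint_minus:
  fixes A B :: "complex mat"
  assumes "A \<in> carrier_mat n m" and "B \<in> carrier_mat n m"
  shows "mat_adjoint (A - B) = mat_adjoint A - mat_adjoint B"
  by (rule mat_adjoint_eqI[of _ n m])
    (use assms mat_adjoint_carrier[OF assms(1)] mat_adjoint_carrier[OF assms(2)] in
      \<open>auto simp: mat_adjoint_index\<close>)

lemma mat_adjoint_smult:
  fixes A :: "complex mat"
  assumes "A \<in> carrier_mat n m"
  shows "mat_adjoint (c \<cdot>\<^sub>m A) = cnj c \<cdot>\<^sub>m mat_adjoint A"
  by (rule mat_adjoint_eqI[of _ n m])
    (use assms mat_adjoint_carrier[OF assms] in \<open>auto simp: mat_adjoint_index\<close>)

lemma mat_adjoint_one: "mat_adjoint (1\<^sub>m n :: complex mat) = 1\<^sub>m n"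
  by (rule mat_adjoint_eqI[of _ n n]) auto

lemma mat_adjoint_mult:
  fixes A B :: "complex mat"
  assumes A: "A \<in> carrier_mat n k" and B: "B \<in> carrier_mat k m"
  shows "mat_adjoint (A * B) = mat_adjoint B * mat_adjoint A"
proof (rule mat_adjoint_eqI[of _ n m])
  fix i j assume "i < m" "j < n"
  then show "(mat_adjoint B * mat_adjoint A) $$ (i, j) = cnj ((A * B) $$ (j, i))"
    using A B mat_adjoint_carrier[OF A] mat_adjoint_carrier[OF B]
    by (auto simp: scalar_prod_def mat_adjoint_index cnj_sum mult.commute intro!: sum.cong)
qed (use A B mat_adjoint_carrier[OF A] mat_adjoint_carrier[OF B] in auto)

lemma hermitian_matI: "A \<in> carrier_mat n n \<Longrightarrow> mat_adjoint A = A \<Longrightarrow> hermitian_mat A"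
  unfolding hermitian_mat_def by auto

lemma hermitian_mat_add:
  "A \<in> carrier_mat n n \<Longrightarrow> B \<in> carrier_mat n n \<Longrightarrow> hermitian_mat A \<Longrightarrow> hermitian_mat B \<Longrightarrow>
    hermitian_mat (A + B)"
  unfolding hermitian_mat_def by (auto simp: mat_adjoint_add)

lemma hermitian_mat_minus:
  "A \<in> carrier_mat n n \<Longrightarrow> B \<in> carrier_mat n n \<Longrightarrow> hermitian_mat A \<Longrightarrow> hermitian_mat B \<Longrightarrow>
    hermitian_mat (A - B)"
  unfolding hermitian_mat_def by (auto simp: mat_adjoint_minus)

lemma hermitian_mat_smult_real:
  "hermitian_mat A \<Longrightarrow> hermitian_mat (complex_of_real c \<cdot>\<^sub>m A)"
  unfolding hermitian_mat_def by (auto simp: mat_adjoint_smult)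

lemma hermitian_mat_entry:
  assumes "A \<in> carrier_mat n n" "hermitian_mat A" "i < n" "j < n"
  shows "A $$ (i, j) = cnj (A $$ (j, i))"
  using mat_adjoint_index[OF assms(1,3,4)] assms(2) by (simp add: hermitian_mat_def)

lemma hermitian_mat_uminus:
  assumes A: "A \<in> carrier_mat n n" and h: "hermitian_mat A"
  shows "hermitian_mat (- A)"
proof (rule hermitian_matI)
  show "mat_adjoint (- A) = - A"
  proof (rule mat_adjoint_eqI[of _ n n])
    fix i j assume ij: "i < n" "j < n"
    then show "(- A) $$ (i, j) = cnj ((- A) $$ (j, i))"
      using hermitian_mat_entry[OF A h ij] A by simp
  qed (use A in auto)
qed (use A in auto)

lemma hermitian_mat_congruence:
  assumes "E \<in> carrier_mat n n" "Z \<in> carrier_mat n n" "mat_adjoint E = E" "hermitian_mat Z"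
  shows "hermitian_mat (E * Z * E)"
  using assms unfolding hermitian_mat_def
  by (auto simp: mat_adjoint_mult[of _ n n _ n] assoc_mult_mat[of _ n n _ n _ n])

lemma hermitian_char_matrix:
  assumes Z: "Z \<in> carrier_mat n n" and h: "hermitian_mat Z"
  shows "hermitian_mat (char_matrix Z (complex_of_real \<mu>))"
proof -
  have "hermitian_mat (complex_of_real (- \<mu>) \<cdot>\<^sub>m 1\<^sub>m n)"
    by (intro hermitian_mat_smult_real hermitian_matI[of _ n]) (simp_all add: mat_adjoint_one)
  then show ?thesis
    unfolding char_matrix_def using Z hermitian_mat_add[OF Z _ h] by simp
qed

section \<open>Sesquilinear and quadratic forms\<close>

lemma cscalar_prod_swap:
  fixes u v :: "complex vec"
  assumes "u \<in> carrier_vec n" and "v \<in> carrier_vec n"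
  shows "conjugate u \<bullet> v = cnj (conjugate v \<bullet> u)"
  using assms by (auto simp: scalar_prod_def cnj_sum mult.commute)

lemma cscalar_prod_adjoint:
  fixes A :: "complex mat"
  assumes A: "A \<in> carrier_mat n m" and u: "u \<in> carrier_vec n" and v: "v \<in> carrier_vec m"
  shows "conjugate u \<bullet> (A *\<^sub>v v) = conjugate (mat_adjoint A *\<^sub>v u) \<bullet> v"
proof -
  have "conjugate u \<bullet> (A *\<^sub>v v) = (\<Sum>i<n. \<Sum>j<m. cnj (u $ i) * A $$ (i, j) * v $ j)"
    using A u v by (auto simp: scalar_prod_def lessThan_atLeast0 sum_distrib_left mult.assoc)
  also have "\<dots> = (\<Sum>j<m. \<Sum>i<n. cnj (u $ i) * A $$ (i, j) * v $ j)"
    by (rule sum.swap)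
  also have "\<dots> = conjugate (mat_adjoint A *\<^sub>v u) \<bullet> v"
    using A u v mat_adjoint_carrier[OF A]
    by (auto simp: scalar_prod_def lessThan_atLeast0 mat_adjoint_index cnj_sum sum_distrib_right
        sum_distrib_left mult.commute mult.left_commute)
  finally show ?thesis .
qed

lemma hermitian_cscalar_prod:
  fixes A :: "complex mat"
  assumes A: "A \<in> carrier_mat n n" and h: "hermitian_mat A"
    and u: "u \<in> carrier_vec n" and v: "v \<in> carrier_vec n"
  shows "conjugate u \<bullet> (A *\<^sub>v v) = cnj (conjugate v \<bullet> (A *\<^sub>v u))"
  using cscalar_prod_adjoint[OF A u v] cscalar_prod_swap[of "A *\<^sub>v u" n v] A u v h
  by (simp add: hermitian_mat_def)

lemma qform_add_smult:
  fixes A :: "complex mat"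
  assumes "A \<in> carrier_mat n n" and "u \<in> carrier_vec n" and "v \<in> carrier_vec n"
  shows "qform A (s \<cdot>\<^sub>v u + t \<cdot>\<^sub>v v) = cnj s * s * qform A u + cnj s * t * (conjugate u \<bullet> (A *\<^sub>v v))
     + cnj t * s * (conjugate v \<bullet> (A *\<^sub>v u)) + cnj t * t * qform A v"
  using assms unfolding qform_def
  by (auto simp: scalar_prod_def lessThan_atLeast0 sum.distrib sum_distrib_left
      algebra_simps intro!: sum.cong)

lemma qform_smult_mat:
  "A \<in> carrier_mat n n \<Longrightarrow> v \<in> carrier_vec n \<Longrightarrow> qform (c \<cdot>\<^sub>m A) v = c * qform A v"
  unfolding qform_def by (auto simp: scalar_prod_def sum_distrib_left ac_simps intro!: sum.cong)

lemma qform_add: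
  "A \<in> carrier_mat n n \<Longrightarrow> B \<in> carrier_mat n n \<Longrightarrow> v \<in> carrier_vec n \<Longrightarrow>
    qform (A + B) v = qform A v + qform B v"
  unfolding qform_def by (simp add: add_mult_distrib_mat_vec scalar_prod_add_distrib[of _ n])

lemma qform_minus:
  "A \<in> carrier_mat n n \<Longrightarrow> B \<in> carrier_mat n n \<Longrightarrow> v \<in> carrier_vec n \<Longrightarrow>
    qform (A - B) v = qform A v - qform B v"
  unfolding qform_def by (simp add: minus_mult_distrib_mat_vec scalar_prod_minus_distrib[of _ n])

lemma qform_uminus: "A \<in> carrier_mat n n \<Longrightarrow> v \<in> carrier_vec n \<Longrightarrow> qform (- A) v = - qform A v"
  unfolding qform_def by simp

lemma qform_char_matrix:
  fixes A :: "complex mat"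
  assumes A: "A \<in> carrier_mat n n" and v: "v \<in> carrier_vec n"
  shows "qform (char_matrix A e) v = qform A v - e * (conjugate v \<bullet> v)"
  using A v qform_add[OF A _ v, of "(- e) \<cdot>\<^sub>m 1\<^sub>m n"] qform_smult_mat[of "1\<^sub>m n" n v "- e"]
  unfolding char_matrix_def by (simp add: qform_def)

lemma qform_congruence:
  fixes E Z :: "complex mat"
  assumes E: "E \<in> carrier_mat n n" and Z: "Z \<in> carrier_mat n n" and hE: "mat_adjoint E = E"
    and x: "x \<in> carrier_vec n"
  shows "qform (E * Z * E) x = qform Z (E *\<^sub>v x)"
proof -
  have "E * Z * E *\<^sub>v x = E *\<^sub>v (Z *\<^sub>v (E *\<^sub>v x))"
    using E Z x by (simp add: assoc_mult_mat_vec[of _ n n _ n])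
  then show ?thesis
    unfolding qform_def using cscalar_prod_adjoint[OF E x, of "Z *\<^sub>v (E *\<^sub>v x)"] hE E Z x by simp
qed

definition norm_sq :: "complex vec \<Rightarrow> real" where
  "norm_sq v = Re (conjugate v \<bullet> v)"

lemma norm_sq_sum:
  assumes "v \<in> carrier_vec n"
  shows "norm_sq v = (\<Sum>i<n. (cmod (v $ i))\<^sup>2)"
proof -
  have "Re (z * cnj z) = (cmod z)\<^sup>2" for z
    by (simp add: complex_norm_square[symmetric])
  then show ?thesis
    using assms by (auto simp: norm_sq_def scalar_prod_def lessThan_atLeast0 mult.commute)
qed

lemma norm_sq_nonneg: "v \<in> carrier_vec n \<Longrightarrow> 0 \<le> norm_sq v"
  by (simp add: norm_sq_sum sum_nonneg)

lemma cscalar_prod_self: "v \<in> carrier_vec n \<Longrightarrow> conjugate v \<bullet> v = complex_of_real (norm_sq v)"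
  by (auto simp: norm_sq_def scalar_prod_def complex_eq_iff Im_sum)

lemma norm_sq_unit_vec: "i < n \<Longrightarrow> norm_sq (unit_vec n i) = 1"
  by (simp add: norm_sq_sum[of _ n] if_distrib[of "\<lambda>x. (cmod x)\<^sup>2"] cong: if_cong)

lemma norm_sq_qform: "v \<in> carrier_vec n \<Longrightarrow> norm_sq v = Re (qform (1\<^sub>m n) v)"
  by (simp add: norm_sq_def qform_def)

lemma abs_Re_cscalar_prod_le:
  assumes u: "u \<in> carrier_vec n" and w: "w \<in> carrier_vec n"
  shows "\<bar>Re (conjugate u \<bullet> w)\<bar> \<le> (norm_sq u + norm_sq w) / 2"
proof -
  have "conjugate u \<bullet> w = (\<Sum>i<n. cnj (u $ i) * w $ i)"
    using u w by (auto simp: scalar_prod_def lessThan_atLeast0)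
  then have "\<bar>Re (conjugate u \<bullet> w)\<bar> \<le> cmod (\<Sum>i<n. cnj (u $ i) * w $ i)"
    by (metis abs_Re_le_cmod)
  also have "\<dots> \<le> (\<Sum>i<n. cmod (u $ i) * cmod (w $ i))"
    by (simp add: norm_mult order_trans[OF norm_sum])
  also have "\<dots> \<le> (\<Sum>i<n. ((cmod (u $ i))\<^sup>2 + (cmod (w $ i))\<^sup>2) / 2)"
    using sum_squares_bound[of "cmod (u $ _)" "cmod (w $ _)"] by (intro sum_mono) (simp add: field_simps)
  also have "\<dots> = (norm_sq u + norm_sq w) / 2"
    using norm_sq_sum[OF u] norm_sq_sum[OF w] by (simp add: sum.distrib sum_divide_distrib[symmetric])
  finally show ?thesis .
qed

lemma mat_vec_norm_sq_bound:
  fixes A :: "complex mat"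
  assumes A: "A \<in> carrier_mat n n"
  shows "\<exists>C\<ge>0. \<forall>v\<in>carrier_vec n. norm_sq (A *\<^sub>v v) \<le> C * norm_sq v"
proof (intro exI[of _ "\<Sum>i<n. (\<Sum>j<n. cmod (A $$ (i, j)))\<^sup>2"] conjI ballI)
  fix v :: "complex vec" assume v: "v \<in> carrier_vec n"
  have entry: "cmod (v $ j) \<le> sqrt (norm_sq v)" if "j < n" for j
    using member_le_sum[of j "{..<n}" "\<lambda>i. (cmod (v $ i))\<^sup>2"] that
    by (simp add: norm_sq_sum[OF v] real_le_rsqrt)
  have row: "(cmod ((A *\<^sub>v v) $ i))\<^sup>2 \<le> (\<Sum>j<n. cmod (A $$ (i, j)))\<^sup>2 * norm_sq v"
    if i: "i < n" for i
  proof -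
    have "(A *\<^sub>v v) $ i = (\<Sum>j<n. A $$ (i, j) * v $ j)"
      using A v i by (auto simp: scalar_prod_def lessThan_atLeast0)
    then have "cmod ((A *\<^sub>v v) $ i) \<le> (\<Sum>j<n. cmod (A $$ (i, j)) * cmod (v $ j))"
      by (simp add: norm_mult order_trans[OF norm_sum])
    also have "\<dots> \<le> (\<Sum>j<n. cmod (A $$ (i, j))) * sqrt (norm_sq v)"
      unfolding sum_distrib_right by (rule sum_mono) (simp add: entry mult_left_mono)
    finally have "(cmod ((A *\<^sub>v v) $ i))\<^sup>2 \<le> ((\<Sum>j<n. cmod (A $$ (i, j))) * sqrt (norm_sq v))\<^sup>2"
      by (simp add: power_mono)
    then show ?thesis
      using norm_sq_nonneg[OF v] by (simp add: power_mult_distrib)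
  qed
  have "norm_sq (A *\<^sub>v v) = (\<Sum>i<n. (cmod ((A *\<^sub>v v) $ i))\<^sup>2)"
    using A v by (intro norm_sq_sum) auto
  also have "\<dots> \<le> (\<Sum>i<n. (\<Sum>j<n. cmod (A $$ (i, j)))\<^sup>2) * norm_sq v"
    unfolding sum_distrib_right by (rule sum_mono) (use row in auto)
  finally show "norm_sq (A *\<^sub>v v) \<le> (\<Sum>i<n. (\<Sum>j<n. cmod (A $$ (i, j)))\<^sup>2) * norm_sq v" .
qed (simp add: sum_nonneg)

lemma qform_norm_sq_bound:
  fixes A :: "complex mat"
  assumes A: "A \<in> carrier_mat n n"
  shows "\<exists>C\<ge>0. \<forall>v\<in>carrier_vec n. \<bar>Re (qform A v)\<bar> \<le> C * norm_sq v"
proof -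
  obtain C where "C \<ge> 0" and C: "\<forall>v\<in>carrier_vec n. norm_sq (A *\<^sub>v v) \<le> C * norm_sq v"
    using mat_vec_norm_sq_bound[OF A] by blast
  have "\<bar>Re (qform A v)\<bar> \<le> (1 + C) / 2 * norm_sq v" if v: "v \<in> carrier_vec n" for v
    using abs_Re_cscalar_prod_le[OF v, of "A *\<^sub>v v"] C v A
    unfolding qform_def by (force simp: field_simps)
  with \<open>C \<ge> 0\<close> show ?thesis by (intro exI[of _ "(1 + C) / 2"]) auto
qed

section \<open>Rayleigh bounds from the spectrum\<close>

lemma nonneg_quadratic_discriminant:
  fixes a b c :: real
  assumes nonneg: "\<And>t. 0 \<le> a * t\<^sup>2 + 2 * b * t + c" and "0 \<le> a"
  shows "b\<^sup>2 \<le> a * c"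
proof (cases "a = 0")
  case True
  show ?thesis
  proof (rule ccontr)
    assume "\<not> ?thesis"
    then have "b \<noteq> 0" using True by auto
    then show False using True nonneg[of "- (c + 1) / (2 * b)"] by (simp add: field_simps)
  qed
next
  case False
  then have "0 \<le> c - b\<^sup>2 / a"
    using nonneg[of "- b / a"] by (simp add: field_simps power2_eq_square)
  then show ?thesis using False \<open>0 \<le> a\<close> by (simp add: field_simps)
qed

lemma positive_semidefinite_cauchy_schwarz:
  fixes H :: "complex mat"
  assumes H: "H \<in> carrier_mat n n" and psd: "positive_semidefinite H"
    and u: "u \<in> carrier_vec n" and v: "v \<in> carrier_vec n"
  shows "(Re (conjugate u \<bullet> (H *\<^sub>v v)))\<^sup>2 \<le> Re (qform H u) * Re (qform H v)"
proof (rule nonneg_quadratic_discriminant)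
  have cross: "conjugate v \<bullet> (H *\<^sub>v u) = cnj (conjugate u \<bullet> (H *\<^sub>v v))"
    using hermitian_cscalar_prod[OF H _ v u] psd by (simp add: positive_semidefinite_def)
  fix t :: real
  have "0 \<le> Re (qform H (complex_of_real t \<cdot>\<^sub>v u + 1 \<cdot>\<^sub>v v))"
    using psd H u v by (simp add: positive_semidefinite_def)
  also have "\<dots> = Re (qform H u) * t\<^sup>2 + 2 * Re (conjugate u \<bullet> (H *\<^sub>v v)) * t + Re (qform H v)"
    unfolding qform_add_smult[OF H u v] cross by (simp add: power2_eq_square)
  finally show "0 \<le> Re (qform H u) * t\<^sup>2 + 2 * Re (conjugate u \<bullet> (H *\<^sub>v v)) * t + Re (qform H v)" .
qed (use psd H u in \<open>simp add: positive_semidefinite_def\<close>)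

lemma positive_semidefinite_mult_vec_bound:
  fixes H :: "complex mat"
  assumes H: "H \<in> carrier_mat n n" and psd: "positive_semidefinite H"
  shows "\<exists>C\<ge>0. \<forall>y\<in>carrier_vec n. norm_sq (H *\<^sub>v y) \<le> C * Re (qform H y)"
proof -
  obtain C where C0: "C \<ge> 0" and C: "\<forall>v\<in>carrier_vec n. \<bar>Re (qform H v)\<bar> \<le> C * norm_sq v"
    using qform_norm_sq_bound[OF H] by blast
  have "norm_sq (H *\<^sub>v y) \<le> C * Re (qform H y)" if y: "y \<in> carrier_vec n" for y
  proof -
    define u where "u = H *\<^sub>v y"
    have u: "u \<in> carrier_vec n" using H y by (simp add: u_def)
    have qy: "0 \<le> Re (qform H y)" using psd H y by (simp add: positive_semidefinite_def)
    have "(norm_sq u)\<^sup>2 \<le> Re (qform H u) * Re (qform H y)"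
      using positive_semidefinite_cauchy_schwarz[OF H psd u y] by (simp add: norm_sq_def u_def)
    also have "\<dots> \<le> C * norm_sq u * Re (qform H y)"
      using C u qy by (intro mult_right_mono) auto
    finally have "norm_sq u * norm_sq u \<le> norm_sq u * (C * Re (qform H y))"
      by (simp add: power2_eq_square ac_simps)
    then show ?thesis
      using norm_sq_nonneg[OF u] C0 qy unfolding u_def
      by (cases "norm_sq (H *\<^sub>v y) = 0") auto
  qed
  with C0 show ?thesis by blast
qed

lemma det_nonzero_norm_sq_bound:
  fixes A :: "complex mat"
  assumes A: "A \<in> carrier_mat n n" and det: "det A \<noteq> 0"
  shows "\<exists>C\<ge>0. \<forall>y\<in>carrier_vec n. norm_sq y \<le> C * norm_sq (A *\<^sub>v y)"
proof -
  obtain K where K: "K \<in> carrier_mat n n" and KA: "K * A = 1\<^sub>m n"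
    using det_non_zero_imp_unit[OF A det] unfolding Units_def ring_mat_def by auto
  obtain C where "C \<ge> 0" and C: "\<forall>v\<in>carrier_vec n. norm_sq (K *\<^sub>v v) \<le> C * norm_sq v"
    using mat_vec_norm_sq_bound[OF K] by blast
  have "y = K *\<^sub>v (A *\<^sub>v y)" if "y \<in> carrier_vec n" for y
    using assoc_mult_mat_vec[OF K A that] KA that by simp
  then show ?thesis using \<open>C \<ge> 0\<close> C A by (metis mult_mat_vec_carrier)
qed

lemma positive_semidefinite_det_nonzero_coercive:
  fixes H :: "complex mat"
  assumes H: "H \<in> carrier_mat n n" and psd: "positive_semidefinite H" and det: "det H \<noteq> 0"
  shows "\<exists>\<delta>>0. \<forall>y\<in>carrier_vec n. \<delta> * norm_sq y \<le> Re (qform H y)"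
proof -
  obtain C where C0: "C \<ge> 0" and C: "\<forall>y\<in>carrier_vec n. norm_sq (H *\<^sub>v y) \<le> C * Re (qform H y)"
    using positive_semidefinite_mult_vec_bound[OF H psd] by blast
  obtain K where K0: "K \<ge> 0" and K: "\<forall>y\<in>carrier_vec n. norm_sq y \<le> K * norm_sq (H *\<^sub>v y)"
    using det_nonzero_norm_sq_bound[OF H det] by blast
  have "norm_sq y \<le> (K * C + 1) * Re (qform H y)" if y: "y \<in> carrier_vec n" for y
  proof -
    have "norm_sq y \<le> K * (C * Re (qform H y))"
      using K C y K0 by (meson mult_left_mono order_trans)
    also have "\<dots> \<le> (K * C + 1) * Re (qform H y)"
      using psd H y by (simp add: positive_semidefinite_def algebra_simps)
    finally show ?thesis .
  qed
  moreover have "K * C + 1 > 0" using K0 C0 by (simp add: add_nonneg_pos)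
  ultimately show ?thesis
    by (intro exI[of _ "1 / (K * C + 1)"]) (simp add: mult.commute pos_divide_le_eq)
qed

lemma qform_greatest_lower_bound:
  fixes Z :: "complex mat"
  assumes Z: "Z \<in> carrier_mat n n" and n: "0 < n"
  shows "\<exists>\<mu>. (\<forall>v\<in>carrier_vec n. \<mu> * norm_sq v \<le> Re (qform Z v)) \<and>
    (\<forall>\<mu>'. (\<forall>v\<in>carrier_vec n. \<mu>' * norm_sq v \<le> Re (qform Z v)) \<longrightarrow> \<mu>' \<le> \<mu>)"
proof -
  define L where "L = {c. \<forall>v\<in>carrier_vec n. c * norm_sq v \<le> Re (qform Z v)}"
  obtain C where C: "\<forall>v\<in>carrier_vec n. \<bar>Re (qform Z v)\<bar> \<le> C * norm_sq v"
    using qform_norm_sq_bound[OF Z] by blast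
  have "- C \<in> L" unfolding L_def using C by force
  then have L: "L \<noteq> {}" by blast
  have bdd: "bdd_above L"
  proof
    fix c assume "c \<in> L"
    then have "c * norm_sq (unit_vec n 0) \<le> Re (qform Z (unit_vec n 0))"
      unfolding L_def by simp
    then show "c \<le> Re (qform Z (unit_vec n 0))"
      using norm_sq_unit_vec[OF n] by simp
  qed
  have "\<forall>v\<in>carrier_vec n. Sup L * norm_sq v \<le> Re (qform Z v)"
  proof
    fix v :: "complex vec" assume v: "v \<in> carrier_vec n"
    show "Sup L * norm_sq v \<le> Re (qform Z v)"
    proof (cases "norm_sq v = 0")
      case True
      then show ?thesis using C v by force
    next
      case False
      then have pos: "0 < norm_sq v" using norm_sq_nonneg[OF v] by simp
      have "Sup L \<le> Re (qform Z v) / norm_sq v"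
        by (rule cSup_least[OF L]) (use v pos in \<open>auto simp: L_def pos_le_divide_eq\<close>)
      then show ?thesis using pos by (simp add: pos_le_divide_eq)
    qed
  qed
  then show ?thesis using cSup_upper[OF _ bdd] by (intro exI[of _ "Sup L"]) (simp add: L_def)
qed

lemma hermitian_min_eigenvalue:
  fixes Z :: "complex mat"
  assumes Z: "Z \<in> carrier_mat n n" and h: "hermitian_mat Z" and n: "0 < n"
  shows "\<exists>\<mu>. eigenvalue Z (complex_of_real \<mu>) \<and> (\<forall>v\<in>carrier_vec n. \<mu> * norm_sq v \<le> Re (qform Z v))"
proof -
  obtain \<mu> where low: "\<forall>v\<in>carrier_vec n. \<mu> * norm_sq v \<le> Re (qform Z v)"
    and greatest: "\<And>\<mu>'. \<forall>v\<in>carrier_vec n. \<mu>' * norm_sq v \<le> Re (qform Z v) \<Longrightarrow> \<mu>' \<le> \<mu>"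
    using qform_greatest_lower_bound[OF Z n] by blast
  define H where "H = char_matrix Z (complex_of_real \<mu>)"
  have H: "H \<in> carrier_mat n n" using Z by (simp add: H_def)
  have qH: "Re (qform H v) = Re (qform Z v) - \<mu> * norm_sq v" if "v \<in> carrier_vec n" for v
    using qform_char_matrix[OF Z that] cscalar_prod_self[OF that] by (simp add: H_def)
  have psd: "positive_semidefinite H"
    unfolding positive_semidefinite_def
    using hermitian_char_matrix[OF Z h] H low qH by (simp add: H_def)
  have "det H = 0"
  proof (rule ccontr)
    assume "det H \<noteq> 0"
    then obtain \<delta> where "\<delta> > 0" and "\<forall>y\<in>carrier_vec n. \<delta> * norm_sq y \<le> Re (qform H y)"
      using positive_semidefinite_det_nonzero_coercive[OF H psd] by blast
    then have "\<mu> + \<delta> \<le> \<mu>" using qH by (intro greatest) (simp add: algebra_simps)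
    with \<open>\<delta> > 0\<close> show False by simp
  qed
  then show ?thesis using low eigenvalue_det[OF Z] by (auto simp: H_def)
qed

lemma hermitian_eigenvalue_lower_bound:
  fixes Z :: "complex mat"
  assumes Z: "Z \<in> carrier_mat n n" and h: "hermitian_mat Z"
    and ev: "\<And>k. eigenvalue Z k \<Longrightarrow> \<exists>x. k = complex_of_real x \<and> b \<le> x"
    and v: "v \<in> carrier_vec n"
  shows "b * norm_sq v \<le> Re (qform Z v)"
proof (cases "n = 0")
  case True
  then show ?thesis using v Z by (simp add: norm_sq_def qform_def scalar_prod_def)
next
  case False
  then obtain \<mu> where "eigenvalue Z (complex_of_real \<mu>)"
    and low: "\<forall>v\<in>carrier_vec n. \<mu> * norm_sq v \<le> Re (qform Z v)"
    using hermitian_min_eigenvalue[OF Z h] by blast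
  then have "b \<le> \<mu>" using ev by fastforce
  then have "b * norm_sq v \<le> \<mu> * norm_sq v" using norm_sq_nonneg[OF v] by (rule mult_right_mono)
  also have "\<dots> \<le> Re (qform Z v)" using low v by blast
  finally show ?thesis .
qed

lemma eigenvalue_uminus:
  fixes A :: "complex mat"
  assumes A: "A \<in> carrier_mat n n" and ev: "eigenvalue (- A) k"
  shows "eigenvalue A (- k)"
proof -
  obtain v where v: "v \<in> carrier_vec n" "v \<noteq> 0\<^sub>v n" and Av: "- A *\<^sub>v v = k \<cdot>\<^sub>v v"
    using ev A unfolding eigenvalue_def eigenvector_def by auto
  have "A *\<^sub>v v = - k \<cdot>\<^sub>v v"
  proof (rule eq_vecI)
    fix i assume "i < dim_vec (- k \<cdot>\<^sub>v v)"
    then have "i < n" using v by simp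
    then show "(A *\<^sub>v v) $ i = (- k \<cdot>\<^sub>v v) $ i"
      using arg_cong[OF Av, of "\<lambda>w. w $ i"] A v by (simp add: minus_equation_iff)
  qed (use A v in simp)
  with v A show ?thesis unfolding eigenvalue_def eigenvector_def by auto
qed

lemma hermitian_eigenvalue_upper_bound:
  fixes Z :: "complex mat"
  assumes Z: "Z \<in> carrier_mat n n" and h: "hermitian_mat Z"
    and ev: "\<And>k. eigenvalue Z k \<Longrightarrow> \<exists>x. k = complex_of_real x \<and> x \<le> a"
    and v: "v \<in> carrier_vec n"
  shows "Re (qform Z v) \<le> a * norm_sq v"
proof -
  have "\<exists>x. k = complex_of_real x \<and> - a \<le> x" if "eigenvalue (- Z) k" for k
    using ev[OF eigenvalue_uminus[OF Z that]] by (metis minus_minus neg_le_iff_le of_real_minus)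
  then have "- a * norm_sq v \<le> Re (qform (- Z) v)"
    using Z hermitian_mat_uminus[OF Z h] v by (intro hermitian_eigenvalue_lower_bound) auto
  then show ?thesis using qform_uminus[OF Z v] by simp
qed

section \<open>Compression by an orthogonal projection\<close>

lemma positive_definite_eigenvalue_pos:
  fixes Z :: "complex mat"
  assumes Z: "Z \<in> carrier_mat n n" and pd: "positive_definite Z"
    and ev: "eigenvalue Z (complex_of_real b)"
  shows "0 < b"
proof -
  obtain v where v: "v \<in> carrier_vec n" "v \<noteq> 0\<^sub>v n" and Zv: "Z *\<^sub>v v = complex_of_real b \<cdot>\<^sub>v v"
    using ev Z unfolding eigenvalue_def eigenvector_def by auto
  have "qform Z v = complex_of_real (b * norm_sq v)"
    unfolding qform_def Zv using v cscalar_prod_self[OF v(1)] by simp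
  then have "0 < b * norm_sq v" using pd Z v by (auto simp: positive_definite_def)
  then show ?thesis using norm_sq_nonneg[OF v(1)] by (simp add: zero_less_mult_iff)
qed

lemma kantorovich_quadratic_form:
  fixes a b P S c \<alpha> \<beta> :: real
  assumes b: "0 < b" and ab: "b \<le> a" and \<beta>: "0 \<le> \<beta>"
    and low: "\<And>s t. b * (s\<^sup>2 * \<alpha> + t\<^sup>2 * \<beta>) \<le> s\<^sup>2 * P + 2 * s * t * c + t\<^sup>2 * S"
    and up: "\<And>s t. s\<^sup>2 * P + 2 * s * t * c + t\<^sup>2 * S \<le> a * (s\<^sup>2 * \<alpha> + t\<^sup>2 * \<beta>)"
  shows "4 * a * b * P \<le> (a + b)\<^sup>2 * (P + 2 * c + S)"
proof (cases "a = b")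
  case True
  have "P + b * \<beta> \<le> P + 2 * c + S"
    using low[of 1 1] up[of 1 0] True by (simp add: distrib_left)
  then have "0 \<le> 2 * c + S" using b \<beta> by (smt (verit) mult_nonneg_nonneg)
  then have "0 \<le> 4 * b\<^sup>2 * (2 * c + S)" by simp
  also have "\<dots> = (a + b)\<^sup>2 * (P + 2 * c + S) - 4 * a * b * P"
    using True by (simp add: power2_eq_square algebra_simps)
  finally show ?thesis by simp
next
  case False
  then have "0 < a - b" using ab by simp
  have "0 \<le> (a - b)\<^sup>2 * P + 2 * (a - b) * (a + b) * c + (a + b)\<^sup>2 * S
      - b * ((a - b)\<^sup>2 * \<alpha> + (a + b)\<^sup>2 * \<beta>)"
    using low[of "a - b" "a + b"] by linarith
  moreover have "0 \<le> a * ((a - b)\<^sup>2 * \<alpha> + (a + b)\<^sup>2 * \<beta>)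
      - ((a - b)\<^sup>2 * P - 2 * (a - b) * (a + b) * c + (a + b)\<^sup>2 * S)"
    using up[of "a - b" "- (a + b)", unfolded power2_minus] by (simp add: algebra_simps)
  ultimately have "0 \<le> a * ((a - b)\<^sup>2 * P + 2 * (a - b) * (a + b) * c + (a + b)\<^sup>2 * S
              - b * ((a - b)\<^sup>2 * \<alpha> + (a + b)\<^sup>2 * \<beta>))
          + b * (a * ((a - b)\<^sup>2 * \<alpha> + (a + b)\<^sup>2 * \<beta>)
              - ((a - b)\<^sup>2 * P - 2 * (a - b) * (a + b) * c + (a + b)\<^sup>2 * S))"
    using b ab by (intro add_nonneg_nonneg mult_nonneg_nonneg) auto
  also have "\<dots> = (a - b) * ((a + b)\<^sup>2 * (P + 2 * c + S) - 4 * a * b * P)"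
    by (simp add: power2_eq_square algebra_simps)
  finally show ?thesis using \<open>0 < a - b\<close> by (simp add: zero_le_mult_iff)
qed

lemma orthogonal_projection_orthogonal:
  fixes E :: "complex mat"
  assumes E: "E \<in> carrier_mat n n" and hE: "mat_adjoint E = E" and EE: "E * E = E"
    and x: "x \<in> carrier_vec n"
  shows "conjugate (E *\<^sub>v x) \<bullet> (x - E *\<^sub>v x) = 0"
proof -
  have Ex: "E *\<^sub>v x \<in> carrier_vec n" using E x by simp
  have "E *\<^sub>v (E *\<^sub>v x) = E *\<^sub>v x"
    using assoc_mult_mat_vec[OF E E x] EE by simp
  then have "conjugate (E *\<^sub>v x) \<bullet> (E *\<^sub>v x) = conjugate (E *\<^sub>v x) \<bullet> x"
    using cscalar_prod_adjoint[OF E x Ex] cscalar_prod_adjoint[OF E x x] hE by simp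
  then show ?thesis using Ex x by (simp add: scalar_prod_minus_distrib[of _ n])
qed

lemma orthogonal_projection_kantorovich:
  fixes Z E :: "complex mat"
  assumes Z: "Z \<in> carrier_mat n n" and h: "hermitian_mat Z"
    and E: "E \<in> carrier_mat n n" and hE: "mat_adjoint E = E" and EE: "E * E = E"
    and b: "0 < b" and ab: "b \<le> a"
    and low: "\<And>v. v \<in> carrier_vec n \<Longrightarrow> b * norm_sq v \<le> Re (qform Z v)"
    and up: "\<And>v. v \<in> carrier_vec n \<Longrightarrow> Re (qform Z v) \<le> a * norm_sq v"
    and x: "x \<in> carrier_vec n"
  shows "4 * a * b * Re (qform Z (E *\<^sub>v x)) \<le> (a + b)\<^sup>2 * Re (qform Z x)"
proof -
  define w where "w = E *\<^sub>v x"
  define r where "r = x - w"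
  have w: "w \<in> carrier_vec n" and r: "r \<in> carrier_vec n" using E x by (simp_all add: w_def r_def)
  have x_split: "x = 1 \<cdot>\<^sub>v w + 1 \<cdot>\<^sub>v r" using w x by (auto simp: r_def)
  have orth: "conjugate w \<bullet> r = 0" "conjugate r \<bullet> w = 0"
    using orthogonal_projection_orthogonal[OF E hE EE x] cscalar_prod_swap[OF r w]
    by (simp_all add: w_def r_def)
  define c where "c = conjugate w \<bullet> (Z *\<^sub>v r)"
  have cross: "conjugate r \<bullet> (Z *\<^sub>v w) = cnj c"
    unfolding c_def by (rule hermitian_cscalar_prod[OF Z h r w])
  let ?v = "\<lambda>s t :: real. complex_of_real s \<cdot>\<^sub>v w + complex_of_real t \<cdot>\<^sub>v r"
  have Q: "Re (qform Z (?v s t)) = s\<^sup>2 * Re (qform Z w) + 2 * s * t * Re c + t\<^sup>2 * Re (qform Z r)"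
    for s t
    unfolding qform_add_smult[OF Z w r] cross c_def[symmetric] by (simp add: power2_eq_square)
  have N: "norm_sq (?v s t) = s\<^sup>2 * norm_sq w + t\<^sup>2 * norm_sq r" for s t
    using qform_add_smult[of "1\<^sub>m n" n w r] w r orth
    by (simp add: norm_sq_qform[of _ n] qform_def power2_eq_square)
  have "4 * a * b * Re (qform Z w) \<le> (a + b)\<^sup>2 * (Re (qform Z w) + 2 * Re c + Re (qform Z r))"
  proof (rule kantorovich_quadratic_form[OF b ab])
    show "0 \<le> norm_sq r" by (rule norm_sq_nonneg[OF r])
  qed (use low[of "?v _ _"] up[of "?v _ _"] w r Q N in auto)
  also have "Re (qform Z w) + 2 * Re c + Re (qform Z r) = Re (qform Z x)"
    using Q[of 1 1] x_split by simp
  finally show ?thesis by (simp add: w_def)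
qed

lemma loewner_leI:
  fixes A B :: "complex mat"
  assumes A: "A \<in> carrier_mat n n" and B: "B \<in> carrier_mat n n"
    and hA: "hermitian_mat A" and hB: "hermitian_mat B"
    and le: "\<And>v. v \<in> carrier_vec n \<Longrightarrow> Re (qform A v) \<le> Re (qform B v)"
  shows "loewner_le A B"
  unfolding loewner_le_def positive_semidefinite_def
  using A B hA hB hermitian_mat_minus[OF B A hB hA] le by (simp add: qform_minus[OF B A])

theorem corollary1p6:
  fixes Z E :: "complex mat" and n :: nat and a b :: real
  assumes "Z \<in> carrier_mat n n" and "E \<in> carrier_mat n n"
    and "positive_definite Z"
    and "eigenvalue Z (complex_of_real a)"
    and "eigenvalue Z (complex_of_real b)"
    and "\<forall>k. eigenvalue Z k \<longrightarrow> (\<exists>x. k = complex_of_real x \<and> b \<le> x \<and> x \<le> a)"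
    and "mat_adjoint E = E" and "E * E = E"
  shows "loewner_le (E * Z * E) (complex_of_real ((a + b)^2 / (4 * a * b)) \<cdot>\<^sub>m Z)"
proof -
  note Z = assms(1) and E = assms(2) and pd = assms(3) and spectrum = assms(6)
    and hE = assms(7) and EE = assms(8)
  have hZ: "hermitian_mat Z" using pd by (simp add: positive_definite_def)
  have b: "0 < b" by (rule positive_definite_eigenvalue_pos[OF Z pd assms(5)])
  have ab: "b \<le> a" using spectrum assms(4) by force
  have low: "b * norm_sq v \<le> Re (qform Z v)" if "v \<in> carrier_vec n" for v
    using hermitian_eigenvalue_lower_bound[OF Z hZ _ that] spectrum by blast
  have up: "Re (qform Z v) \<le> a * norm_sq v" if "v \<in> carrier_vec n" for v
    using hermitian_eigenvalue_upper_bound[OF Z hZ _ that] spectrum by blast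
  show ?thesis
  proof (rule loewner_leI[of _ n])
    show "hermitian_mat (complex_of_real ((a + b)\<^sup>2 / (4 * a * b)) \<cdot>\<^sub>m Z)"
      by (rule hermitian_mat_smult_real[OF hZ])
  next
    fix x :: "complex vec" assume x: "x \<in> carrier_vec n"
    have "4 * a * b * Re (qform Z (E *\<^sub>v x)) \<le> (a + b)\<^sup>2 * Re (qform Z x)"
      by (rule orthogonal_projection_kantorovich[OF Z hZ E hE EE b ab low up x])
    then show "Re (qform (E * Z * E) x) \<le> Re (qform (complex_of_real ((a + b)^2 / (4 * a * b)) \<cdot>\<^sub>m Z) x)"
      using b ab qform_congruence[OF E Z hE x] qform_smult_mat[OF Z x]
      by (simp add: field_simps)
  qed (use Z E hermitian_mat_congruence[OF E Z hE hZ] in simp_all)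
qed

end
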